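(* Consider the two-camp, two-phase zero-sum game with bias-dependent camp weights described in the context. For either camp and any fixed strategy of the other camp, it is optimal to exhaust the entire budget, and if not, it is optimal to not invest at all. Furthermore, it is an optimal strategy to invest on at most one node in a given phase (i.e., there is a best response in which each of the camp's two phase-investment vectors has at most one nonzero entry).
   Context: A social network has node set $N=\{1,\dots,n\}$ and a real $n\times n$ matrix $\mathbf{w}=(w_{ij})$ with $\sum_j|w_{ij}|<1$ for every $i$; write $\Delta=(\mathbf{I}-\mathbf{w})^{-1}$. Each node $i$ has an initial opinion $v_i^0$, a bias weight $w_{ii}^0$, and a total camp weight $\theta_i$. The good camp chooses $\mathbf{x^{(1)}},\mathbf{x^{(2)}}\ge 0$ with $\sum_i(x_i^{(1)}+x_i^{(2)})\le k_g$; the bad camp chooses $\mathbf{y^{(1)}},\mathbf{y^{(2)}}\ge 0$ with $\sum_i(y_i^{(1)}+y_i^{(2)})\le k_b$ ($k_g,k_b\ge0$). Opinions evolve by $\mathbf{v^{(0)}}=\mathbf{v^0}$ and for $p=1,2$: $\mathbf{v^{(p)}}=\Delta(\mathbf{w^0}\circ\mathbf{v^{(p-1)}}+\mathbf{w_g^{(p)}}\circ\mathbf{x^{(p)}}-\mathbf{w_b^{(p)}}\circ\mathbf{y^{(p)}})$, where $\circ$ is the entrywise product, $\mathbf{w^0}=(w_{ii}^0)_i$, $w_{ig}^{(p)}=\theta_i\frac{1+w_{ii}^0v_i^{(p-1)}}{2}$ and $w_{ib}^{(p)}=\theta_i\frac{1-w_{ii}^0v_i^{(p-1)}}{2}$.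 The good camp's utility is $\sum_i v_i^{(2)}$ and the bad camp's utility is $-\sum_i v_i^{(2)}$. *)

theory Defs
  imports "HOL-Analysis.Analysis"
begin

text \<open>Nodes are the elements of a finite type 'n; vectors are real^'n,
  matrices real^'n^'n (rows indexed first).\<close>

definition Delta :: "real^'n^'n \<Rightarrow> real^'n^'n" where
  "Delta w = matrix_inv (mat 1 - w)"

definition wg :: "real^'n \<Rightarrow> real^'n \<Rightarrow> real^'n \<Rightarrow> real^'n" where
  "wg \<theta> w0 vprev = (\<chi> i. \<theta>$i * (1 + w0$i * vprev$i) / 2)"

definition wb :: "real^'n \<Rightarrow> real^'n \<Rightarrow> real^'n \<Rightarrow> real^'n" where
  "wb \<theta> w0 vprev = (\<chi> i. \<theta>$i * (1 - w0$i * vprev$i) / 2)"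

definition phase_step ::
  "real^'n^'n \<Rightarrow> real^'n \<Rightarrow> real^'n \<Rightarrow> real^'n \<Rightarrow> real^'n \<Rightarrow> real^'n \<Rightarrow> real^'n" where
  "phase_step w w0 \<theta> vprev x y =
     Delta w *v (\<chi> i. w0$i * vprev$i + (wg \<theta> w0 vprev)$i * x$i - (wb \<theta> w0 vprev)$i * y$i)"

definition good_utility ::
  "real^'n^'n \<Rightarrow> real^'n \<Rightarrow> real^'n \<Rightarrow> real^'n \<Rightarrow>
   real^'n \<Rightarrow> real^'n \<Rightarrow> real^'n \<Rightarrow> real^'n \<Rightarrow> real" where
  "good_utility w w0 \<theta> v0 x1 x2 y1 y2 =
     (\<Sum>i\<in>UNIV. (phase_step w w0 \<theta> (phase_step w w0 \<theta> v0 x1 y1) x2 y2) $ i)"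

definition feasible :: "real \<Rightarrow> real^'n \<Rightarrow> real^'n \<Rightarrow> bool" where
  "feasible k a1 a2 \<longleftrightarrow> (\<forall>i. 0 \<le> a1$i \<and> 0 \<le> a2$i) \<and>
     (\<Sum>i\<in>UNIV. a1$i) + (\<Sum>i\<in>UNIV. a2$i) \<le> k"

definition total_investment :: "real^'n \<Rightarrow> real^'n \<Rightarrow> real" where
  "total_investment a1 a2 = (\<Sum>i\<in>UNIV. a1$i) + (\<Sum>i\<in>UNIV. a2$i)"

definition at_most_one_nonzero :: "real^'n \<Rightarrow> bool" where
  "at_most_one_nonzero a \<longleftrightarrow> card {i. a$i \<noteq> 0} \<le> 1"

definition good_best_response where
  "good_best_response w w0 \<theta> v0 kg y1 y2 x1 x2 \<longleftrightarrow> feasible kg x1 x2 \<and>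
     (\<forall>x1' x2'. feasible kg x1' x2' \<longrightarrow>
        good_utility w w0 \<theta> v0 x1' x2' y1 y2 \<le> good_utility w w0 \<theta> v0 x1 x2 y1 y2)"

definition bad_best_response where
  "bad_best_response w w0 \<theta> v0 kb x1 x2 y1 y2 \<longleftrightarrow> feasible kb y1 y2 \<and>
     (\<forall>y1' y2'. feasible kb y1' y2' \<longrightarrow>
        - good_utility w w0 \<theta> v0 x1 x2 y1' y2' \<le> - good_utility w w0 \<theta> v0 x1 x2 y1 y2)"

end

theory Submission
  imports Defs
begin

(* The final opinion sum is not jointly affine in a camp's two investment vectors (the phase-2
   camp weights depend on the phase-1 opinions), but it is affine in each of them separately,
   whatever the opponent does. It therefore attains a maximum on the compact feasible set, and a
   maximizer can be moved, one vector at a time and without loss of utility, to a vertex of the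
   simplex left by the remaining budget: either to 0 or to that budget placed on a single node.
   Improving the first vector and then the second exhausts the budget unless the second vector
   became 0; then one more improvement of the first vector, now with the whole budget available,
   ends at total investment 0 or k. *)

definition affine_fun :: "(real^'n \<Rightarrow> real) \<Rightarrow> bool" where
  "affine_fun f \<longleftrightarrow> (\<exists>a c. \<forall>x. f x = a + c \<bullet> x)"

lemma affine_fun_const: "affine_fun (\<lambda>x. a)"
  unfolding affine_fun_def by (intro exI[of _ a] exI[of _ 0]) simp

lemma affine_fun_component: "affine_fun (\<lambda>x. x $ j)"
  unfolding affine_fun_def by (intro exI[of _ 0] exI[of _ "axis j 1"]) (simp add: inner_axis')

lemma affine_fun_add:
  assumes "affine_fun f" "affine_fun g" shows "affine_fun (\<lambda>x. f x + g x)"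
proof -
  obtain a c b d where "\<And>x. f x = a + c \<bullet> x" "\<And>x. g x = b + d \<bullet> x"
    using assms unfolding affine_fun_def by metis
  then show ?thesis unfolding affine_fun_def
    by (intro exI[of _ "a + b"] exI[of _ "c + d"]) (simp add: inner_add_left)
qed

lemma affine_fun_mult:
  assumes "affine_fun f" shows "affine_fun (\<lambda>x. r * f x)"
proof -
  obtain a c where "\<And>x. f x = a + c \<bullet> x" using assms unfolding affine_fun_def by metis
  then show ?thesis unfolding affine_fun_def
    by (intro exI[of _ "r * a"] exI[of _ "r *\<^sub>R c"]) (simp add: distrib_left)
qed

lemma affine_fun_mult_right: "affine_fun f \<Longrightarrow> affine_fun (\<lambda>x. f x * r)"
  using affine_fun_mult[of f r] by (simp add: mult.commute)

lemma affine_fun_divide: "affine_fun f \<Longrightarrow> affine_fun (\<lambda>x. f x / r)"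
  using affine_fun_mult_right[of f "1 / r"] by simp

lemma affine_fun_neg: "affine_fun f \<Longrightarrow> affine_fun (\<lambda>x. - f x)"
  using affine_fun_mult[of f "-1"] by simp

lemma affine_fun_diff: "affine_fun f \<Longrightarrow> affine_fun g \<Longrightarrow> affine_fun (\<lambda>x. f x - g x)"
  using affine_fun_add[of f "\<lambda>x. - g x"] affine_fun_neg[of g] by simp

lemma affine_fun_sum:
  "finite A \<Longrightarrow> (\<And>k. k \<in> A \<Longrightarrow> affine_fun (F k)) \<Longrightarrow> affine_fun (\<lambda>x. \<Sum>k\<in>A. F k x)"
  by (induction A rule: finite_induct) (auto intro: affine_fun_const affine_fun_add)

lemmas affine_fun_intros = affine_fun_const affine_fun_component affine_fun_add affine_fun_mult
  affine_fun_mult_right affine_fun_divide affine_fun_diff affine_fun_sum finite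

lemma affine_fun_phase_step_prev:
  "(\<And>k. affine_fun (\<lambda>z. v z $ k)) \<Longrightarrow> affine_fun (\<lambda>z. phase_step w w0 \<theta> (v z) x y $ j)"
  unfolding phase_step_def wg_def wb_def matrix_vector_mult_def
  by (simp, intro affine_fun_intros)

lemma affine_fun_phase_step_good:
  "(\<And>k. affine_fun (\<lambda>z. x z $ k)) \<Longrightarrow> affine_fun (\<lambda>z. phase_step w w0 \<theta> v (x z) y $ j)"
  unfolding phase_step_def wg_def wb_def matrix_vector_mult_def
  by (simp, intro affine_fun_intros)

lemma affine_fun_phase_step_bad:
  "(\<And>k. affine_fun (\<lambda>z. y z $ k)) \<Longrightarrow> affine_fun (\<lambda>z. phase_step w w0 \<theta> v x (y z) $ j)"
  unfolding phase_step_def wg_def wb_def matrix_vector_mult_def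
  by (simp, intro affine_fun_intros)

lemma affine_fun_expansion:
  assumes "affine_fun f" shows "f x = f 0 + (\<Sum>i\<in>UNIV. x$i * (f (axis i 1) - f 0))"
proof -
  obtain a c where f: "\<And>x. f x = a + c \<bullet> x" using assms unfolding affine_fun_def by blast
  have "f (axis i 1) - f 0 = c $ i" for i by (simp add: f inner_axis)
  then show ?thesis by (simp add: f inner_vec_def mult.commute)
qed

lemma continuous_on_affine_fun_compose:
  assumes "affine_fun g" "continuous_on S h" shows "continuous_on S (\<lambda>p. g (h p))"
proof -
  obtain a c where g: "\<And>x. g x = a + c \<bullet> x" using assms(1) unfolding affine_fun_def by blast
  show ?thesis unfolding g by (intro continuous_intros assms(2))
qed

lemma affine_fun_le_at_vertex:
  assumes f: "affine_fun f" and nonneg: "\<forall>i. 0 \<le> x$i" and budget: "(\<Sum>i\<in>UNIV. x$i) \<le> t"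
  shows "\<exists>z. f x \<le> f z \<and> (z = 0 \<or> (\<exists>i. z = axis i t))"
proof -
  obtain a c where fc: "\<And>x. f x = a + c \<bullet> x" using f unfolding affine_fun_def by blast
  obtain i where imax: "\<And>j. c$j \<le> c$i"
    using Max_in[of "range (($) c)"] Max_ge[of "range (($) c)"] by fastforce
  have "c \<bullet> x \<le> (\<Sum>j\<in>UNIV. c$i * x$j)"
    unfolding inner_vec_def by (rule sum_mono) (simp add: mult_right_mono imax nonneg)
  also have "\<dots> = c$i * (\<Sum>j\<in>UNIV. x$j)" by (simp add: sum_distrib_left)
  finally have cx: "c \<bullet> x \<le> c$i * (\<Sum>j\<in>UNIV. x$j)" .
  show ?thesis
  proof (cases "c$i \<le> 0")
    case True
    have "c$i * (\<Sum>j\<in>UNIV. x$j) \<le> 0"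
      using True nonneg by (simp add: mult_nonpos_nonneg sum_nonneg)
    then show ?thesis using cx by (intro exI[of _ 0]) (simp add: fc)
  next
    case False
    then have "c$i * (\<Sum>j\<in>UNIV. x$j) \<le> c$i * t" using budget by simp
    then show ?thesis using cx by (intro exI[of _ "axis i t"]) (auto simp: fc inner_axis)
  qed
qed

lemma separately_affine_continuous_on:
  assumes "\<And>b. affine_fun (\<lambda>a. F a b)" "\<And>a. affine_fun (\<lambda>b. F a b)"
  shows "continuous_on S (\<lambda>p. F (fst p) (snd p))"
proof -
  have "F (fst p) (snd p) =
      F 0 (snd p) + (\<Sum>i\<in>UNIV. fst p $ i * (F (axis i 1) (snd p) - F 0 (snd p)))" for p
    using affine_fun_expansion[OF assms(1)] .
  then show ?thesis
    by (simp only:) (intro continuous_intros continuous_on_affine_fun_compose assms(2))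
qed

lemma compact_feasible: "compact {p :: (real^'n) \<times> (real^'n). feasible k (fst p) (snd p)}"
  unfolding compact_eq_bounded_closed
proof
  show "closed {p :: (real^'n) \<times> (real^'n). feasible k (fst p) (snd p)}"
    unfolding feasible_def
    by (intro closed_Collect_conj closed_Collect_all closed_Collect_le continuous_intros)
  show "bounded {p :: (real^'n) \<times> (real^'n). feasible k (fst p) (snd p)}"
    unfolding bounded_iff
  proof (intro exI ballI)
    fix p :: "(real^'n) \<times> (real^'n)" assume "p \<in> {p. feasible k (fst p) (snd p)}"
    then have "(\<Sum>i\<in>UNIV. \<bar>fst p $ i\<bar>) + (\<Sum>i\<in>UNIV. \<bar>snd p $ i\<bar>) \<le> k"
      by (simp add: feasible_def)
    moreover have "norm p \<le> norm (fst p) + norm (snd p)"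
      using norm_Pair_le[of "fst p" "snd p"] by simp
    ultimately show "norm p \<le> k"
      using norm_le_l1_cart[of "fst p"] norm_le_l1_cart[of "snd p"] by linarith
  qed
qed

lemma separately_affine_attains_max:
  assumes "\<And>b. affine_fun (\<lambda>a. F a b)" "\<And>a. affine_fun (\<lambda>b. F a b)" "0 \<le> k"
  shows "\<exists>a b. feasible k a b \<and> (\<forall>a' b'. feasible k a' b' \<longrightarrow> F a' b' \<le> F a b)"
proof -
  have "(0, 0) \<in> {p :: (real^'n) \<times> (real^'n). feasible k (fst p) (snd p)}"
    using assms(3) by (simp add: feasible_def)
  then obtain p where "feasible k (fst p) (snd p)"
      "\<forall>q \<in> {p. feasible k (fst p) (snd p)}. F (fst q) (snd q) \<le> F (fst p) (snd p)"
    using continuous_attains_sup[OF compact_feasible _ separately_affine_continuous_on[OF assms(1,2)]]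
    by blast
  then show ?thesis by auto
qed

lemma feasible_swap: "feasible k a b \<longleftrightarrow> feasible k b a"
  unfolding feasible_def by auto

lemma total_investment_swap: "total_investment a b = total_investment b a"
  unfolding total_investment_def by simp

lemma at_most_one_nonzero_zero: "at_most_one_nonzero 0"
  unfolding at_most_one_nonzero_def by simp

lemma at_most_one_nonzero_axis: "at_most_one_nonzero (axis i t)"
proof -
  have "{j. axis i t $ j \<noteq> 0} \<subseteq> {i}" by (auto simp: axis_def)
  then show ?thesis unfolding at_most_one_nonzero_def
    using card_mono[of "{i}"] by fastforce
qed

lemma feasible_improve_first:
  assumes f: "affine_fun (\<lambda>a. F a b)" and ab: "feasible k a b"
  shows "\<exists>a'. F a b \<le> F a' b \<and> feasible k a' b \<and> at_most_one_nonzero a' \<and>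
    (a' = 0 \<or> total_investment a' b = k)"
proof -
  let ?t = "k - (\<Sum>i\<in>UNIV. b$i)"
  have a: "\<forall>i. 0 \<le> a$i" and b: "\<forall>i. 0 \<le> b$i" and budget: "(\<Sum>i\<in>UNIV. a$i) \<le> ?t"
    using ab by (auto simp: feasible_def)
  have t: "0 \<le> ?t" using budget a by (meson order_trans sum_nonneg)
  obtain z where Fz: "F a b \<le> F z b" and z: "z = 0 \<or> (\<exists>i. z = axis i ?t)"
    using affine_fun_le_at_vertex[OF f a budget] by blast
  from z show ?thesis
  proof
    assume "z = 0"
    then show ?thesis using Fz b t
      by (intro exI[of _ z]) (simp add: feasible_def at_most_one_nonzero_zero)
  next
    assume "\<exists>i. z = axis i ?t"
    then obtain i where "z = axis i ?t" by blast
    then show ?thesis using Fz b t at_most_one_nonzero_axis[of i ?t]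
      by (intro exI[of _ z]) (auto simp: feasible_def total_investment_def axis_def)
  qed
qed

lemma feasible_improve_second:
  assumes "affine_fun (\<lambda>b. F a b)" "feasible k a b"
  shows "\<exists>b'. F a b \<le> F a b' \<and> feasible k a b' \<and> at_most_one_nonzero b' \<and>
    (b' = 0 \<or> total_investment a b' = k)"
  using feasible_improve_first[of "\<lambda>b a. F a b" a k b] assms
  by (simp add: feasible_swap total_investment_swap)

lemma separately_affine_sparse_max:
  assumes F1: "\<And>b. affine_fun (\<lambda>a. F a b)" and F2: "\<And>a. affine_fun (\<lambda>b. F a b)"
    and k: "0 \<le> k"
  shows "\<exists>a b. (feasible k a b \<and> (\<forall>a' b'. feasible k a' b' \<longrightarrow> F a' b' \<le> F a b)) \<and>
     (total_investment a b = k \<or> total_investment a b = 0) \<and>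
     at_most_one_nonzero a \<and> at_most_one_nonzero b"
proof -
  obtain a b where ab: "feasible k a b" and max: "\<forall>a' b'. feasible k a' b' \<longrightarrow> F a' b' \<le> F a b"
    using separately_affine_attains_max[OF F1 F2 k] by blast
  obtain a1 where le1: "F a b \<le> F a1 b" and a1b: "feasible k a1 b" and a1: "at_most_one_nonzero a1"
    using feasible_improve_first[where F = F, OF F1 ab] by blast
  obtain b1 where le2: "F a1 b \<le> F a1 b1" and a1b1: "feasible k a1 b1"
      and b1: "at_most_one_nonzero b1" and b1_cases: "b1 = 0 \<or> total_investment a1 b1 = k"
    using feasible_improve_second[where F = F, OF F2 a1b] by blast
  have max1: "\<forall>a' b'. feasible k a' b' \<longrightarrow> F a' b' \<le> F a1 b1"
    using max le1 le2 by (meson order_trans)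
  show ?thesis
  proof (cases "total_investment a1 b1 = k")
    case True
    with a1b1 max1 a1 b1 show ?thesis by blast
  next
    case False
    with b1_cases have "b1 = 0" by simp
    with a1b1 obtain a2 where le3: "F a1 0 \<le> F a2 0" and a2: "feasible k a2 0" "at_most_one_nonzero a2"
        and a2_cases: "a2 = 0 \<or> total_investment a2 0 = k"
      using feasible_improve_first[where F = F and b = 0, OF F1, of k a1] by blast
    have "\<forall>a' b'. feasible k a' b' \<longrightarrow> F a' b' \<le> F a2 0"
      using max1 le3 \<open>b1 = 0\<close> by (meson order_trans)
    moreover have "total_investment a2 0 = k \<or> total_investment a2 0 = 0"
      using a2_cases by (auto simp: total_investment_def)
    ultimately show ?thesis using a2 at_most_one_nonzero_zero by blast
  qed
qed

lemma affine_fun_good_utility_x1: "affine_fun (\<lambda>z. good_utility w w0 \<theta> v0 z x2 y1 y2)"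
  unfolding good_utility_def
  by (intro affine_fun_sum finite affine_fun_phase_step_prev affine_fun_phase_step_good
      affine_fun_component)

lemma affine_fun_good_utility_x2: "affine_fun (\<lambda>z. good_utility w w0 \<theta> v0 x1 z y1 y2)"
  unfolding good_utility_def
  by (intro affine_fun_sum finite affine_fun_phase_step_good affine_fun_component)

lemma affine_fun_good_utility_y1: "affine_fun (\<lambda>z. good_utility w w0 \<theta> v0 x1 x2 z y2)"
  unfolding good_utility_def
  by (intro affine_fun_sum finite affine_fun_phase_step_prev affine_fun_phase_step_bad
      affine_fun_component)

lemma affine_fun_good_utility_y2: "affine_fun (\<lambda>z. good_utility w w0 \<theta> v0 x1 x2 y1 z)"
  unfolding good_utility_def
  by (intro affine_fun_sum finite affine_fun_phase_step_bad affine_fun_component)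

theorem lemma2:
  fixes w :: "real^'n^'n" and w0 \<theta> v0 :: "real^'n" and kg kb :: real
  assumes rows: "\<forall>i. (\<Sum>j\<in>UNIV. \<bar>w$i$j\<bar>) < 1"
    and kg: "0 \<le> kg" and kb: "0 \<le> kb"
  shows "(\<forall>y1 y2. feasible kb y1 y2 \<longrightarrow>
           (\<exists>x1 x2. good_best_response w w0 \<theta> v0 kg y1 y2 x1 x2 \<and>
              (total_investment x1 x2 = kg \<or> total_investment x1 x2 = 0) \<and>
              at_most_one_nonzero x1 \<and> at_most_one_nonzero x2))
       \<and> (\<forall>x1 x2. feasible kg x1 x2 \<longrightarrow>
           (\<exists>y1 y2. bad_best_response w w0 \<theta> v0 kb x1 x2 y1 y2 \<and>
              (total_investment y1 y2 = kb \<or> total_investment y1 y2 = 0) \<and>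
              at_most_one_nonzero y1 \<and> at_most_one_nonzero y2))"
proof (intro conjI allI impI)
  fix y1 y2 :: "real^'n"
  show "\<exists>x1 x2. good_best_response w w0 \<theta> v0 kg y1 y2 x1 x2 \<and>
      (total_investment x1 x2 = kg \<or> total_investment x1 x2 = 0) \<and>
      at_most_one_nonzero x1 \<and> at_most_one_nonzero x2"
    using separately_affine_sparse_max[OF affine_fun_good_utility_x1 affine_fun_good_utility_x2 kg]
    unfolding good_best_response_def .
next
  fix x1 x2 :: "real^'n"
  show "\<exists>y1 y2. bad_best_response w w0 \<theta> v0 kb x1 x2 y1 y2 \<and>
      (total_investment y1 y2 = kb \<or> total_investment y1 y2 = 0) \<and>
      at_most_one_nonzero y1 \<and> at_most_one_nonzero y2"
    using separately_affine_sparse_max[OF affine_fun_neg[OF affine_fun_good_utility_y1]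
        affine_fun_neg[OF affine_fun_good_utility_y2] kb]
    unfolding bad_best_response_def .
qed

end
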